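(* Assume $a>0$. For $r\in(0,1]$ and $t>0$ let $x_{\rm L}(r,t,a)$ denote the left edge of the support of the three-parametric MP density $\rho(\cdot;r,t,a)$, namely the middle real root of the cubic \[ S(x;r,t,a)=4ax^3-\{8a^2+4a(3r+2)t-t^2\}x^2+2\big[2a^3-2a^2(5r-2)t+a\{r(6r-1)+1\}t^2-(r+1)t^3\big]x+(r-1)^2t^2\{a^2-a(4r-2)t+t^2\}. \] (i) The time-evolution of the support touches the origin $x=0$ (i.e. $x_{\rm L}(r,t,a)=0$ for some $t>0$) if and only if $r=1$; for $r\in(0,1)$ one has $x_{\rm L}(r,t,a)>0$. (ii) When $r=1$, with the critical time $t_{\rm c}(a):=a$, one has $x_{\rm L}(1,t,a)>0$ for $0\le t<t_{\rm c}(a)$ and $x_{\rm L}(1,t,a)=0$ for all $t\ge t_{\rm c}(a)$. Moreover \[ x_{\rm L}(1,t,a)\simeq\frac{4}{27a^2}(t_{\rm c}(a)-t)^{3}\quad\text{as } t\nearrow t_{\rm c}(a). \]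
   Context: The three-parametric MP density $\rho(x;r,t,a)$ ($r\in(0,1]$, $t>0$, $a\ge0$) is the density of the weak limit, as $N,M\to\infty$ with $N/M\to r$, of $\frac1N\sum_{j}\delta_{X^N_j(t)/M}$, where $X^N_j$ solve $dX^N_j=2\sqrt{X^N_j}dB_j+2(M-N+1)dt+4X^N_j\sum_{k\neq j}\frac{dt}{X^N_j-X^N_k}$ with independent standard Brownian motions $B_j$ and $X^N_j(0)=aM$; equivalently its Stieltjes transform $G$ solves $z=\frac1G+\frac{t}{1-rtG}+\frac{a}{(1-rtG)^2}$. Its support is $[x_{\rm L}(r,t,a),x_{\rm R}(r,t,a)]$ where $x_{\rm L}\le x_{\rm R}$ are the two largest of the three real roots of $S(\cdot;r,t,a)$. The notation $f\simeq g$ means $f/g\to1$. *)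

theory Defs
  imports "HOL-Analysis.Analysis" "HOL-Library.Landau_Symbols"
begin

definition S_cubic :: "real \<Rightarrow> real \<Rightarrow> real \<Rightarrow> real \<Rightarrow> real" where
  "S_cubic x r t a =
     4*a*x^3 - (8*a^2 + 4*a*(3*r+2)*t - t^2)*x^2
     + 2*(2*a^3 - 2*a^2*(5*r-2)*t + a*(r*(6*r-1)+1)*t^2 - (r+1)*t^3)*x
     + (r-1)^2*t^2*(a^2 - a*(4*r-2)*t + t^2)"

definition xL :: "real \<Rightarrow> real \<Rightarrow> real \<Rightarrow> real" where
  "xL r t a = (THE y. \<exists>y1 y3. y1 \<le> y \<and> y \<le> y3 \<and>
       (\<forall>x. S_cubic x r t a = 4*a*(x-y1)*(x-y)*(x-y3)))"

definition tc :: "real \<Rightarrow> real" where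
  "tc a = a"

end

theory Submission
  imports Defs "HOL-Library.Quadratic_Discriminant" "HOL-Real_Asymp.Real_Asymp"
begin

(* The middle root of the cubic S is characterised by the signs of S. For r < 1 one has
   S(0) > 0 and S(a + t) < 0, while S has positive leading coefficient; so S has a negative
   root, a root in (0, a + t) and a root beyond a + t, and the middle one is positive.
   For r = 1 the constant term vanishes and S(x) = x q(x) with q quadratic whose constant
   term is 4(a - t)^3: for t < a both roots of q are positive and x_L is the smaller one,
   for t >= a the roots of q straddle 0 and x_L = 0. Rationalising, the smaller root is
   8(a - t)^3 divided by a denominator tending to 54 a^2 as t tends to a. *)

lemma cubic_sorted_roots_unique:
  fixes y1 y2 y3 z1 z2 z3 :: real
  assumes "y1 \<le> y2" "y2 \<le> y3" "z1 \<le> z2" "z2 \<le> z3"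
    and same: "\<And>x. (x-y1)*(x-y2)*(x-y3) = (x-z1)*(x-z2)*(x-z3)"
  shows "y1 = z1 \<and> y2 = z2 \<and> y3 = z3"
proof -
  have "z1 \<le> y1" using same[of y1] assms(3,4) by auto
  moreover have "y1 \<le> z1" using same[of z1] assms(1,2) by auto
  moreover have "y3 \<le> z3" using same[of y3] assms(3,4) by auto
  moreover have "z3 \<le> y3" using same[of z3] assms(1,2) by auto
  moreover have "y1+y2+y3 = z1+z2+z3"
    \<comment> \<open>for a monic cubic p, p(1) + p(-1) - 2p(0) is minus twice the sum of the roots\<close>
    using same[of 1] same[of "-1"] same[of 0] by (simp add: algebra_simps)
  ultimately show ?thesis by auto
qed

lemma xL_eqI:
  assumes "a \<noteq> 0" "y1 \<le> y2" "y2 \<le> y3"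
    and S: "\<And>x. S_cubic x r t a = 4*a*(x-y1)*(x-y2)*(x-y3)"
  shows "xL r t a = y2"
  unfolding xL_def
proof (rule the_equality)
  show "\<exists>z1 z3. z1 \<le> y2 \<and> y2 \<le> z3 \<and> (\<forall>x. S_cubic x r t a = 4*a*(x-z1)*(x-y2)*(x-z3))"
    using assms by blast
next
  fix y assume "\<exists>z1 z3. z1 \<le> y \<and> y \<le> z3 \<and> (\<forall>x. S_cubic x r t a = 4*a*(x-z1)*(x-y)*(x-z3))"
  then obtain z1 z3 where z: "z1 \<le> y" "y \<le> z3" "\<And>x. S_cubic x r t a = 4*a*(x-z1)*(x-y)*(x-z3)"
    by blast
  have "(x-y1)*(x-y2)*(x-y3) = (x-z1)*(x-y)*(x-z3)" for x
    using S[of x] z(3)[of x] \<open>a \<noteq> 0\<close> by (simp add: mult.assoc)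
  then show "y = y2"
    using cubic_sorted_roots_unique[OF assms(2,3) z(1,2)] by blast
qed

lemma cubic_eq_factor_by_roots:
  fixes A B C D y1 y2 y3 :: real
  assumes "y1 < y2" "y2 < y3"
    and roots: "A*y1^3+B*y1^2+C*y1+D = 0" "A*y2^3+B*y2^2+C*y2+D = 0" "A*y3^3+B*y3^2+C*y3+D = 0"
  shows "A*x^3+B*x^2+C*x+D = A*(x-y1)*(x-y2)*(x-y3)"
proof -
  have "(y1-y2)*(A*(y1^2+y1*y2+y2^2)+B*(y1+y2)+C) = 0"
    using roots(1,2) by (simp add: algebra_simps power2_eq_square power3_eq_cube)
  hence r12: "A*(y1^2+y1*y2+y2^2)+B*(y1+y2)+C = 0" using assms(1) by simp
  have "(y1-y3)*(A*(y1^2+y1*y3+y3^2)+B*(y1+y3)+C) = 0"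
    using roots(1,3) by (simp add: algebra_simps power2_eq_square power3_eq_cube)
  hence r13: "A*(y1^2+y1*y3+y3^2)+B*(y1+y3)+C = 0" using assms by simp
  have "(y2-y3)*(A*(y1+y2+y3)+B) = 0" using r12 r13 by (simp add: algebra_simps power2_eq_square)
  hence B: "B = -A*(y1+y2+y3)" using assms by simp
  have C: "C = A*(y1*y2+y1*y3+y2*y3)" using r12 B by (simp add: algebra_simps power2_eq_square)
  have D: "D = -A*y1*y2*y3" using roots(1) B C by (simp add: algebra_simps power2_eq_square power3_eq_cube)
  show ?thesis by (simp only: B C D) (simp add: algebra_simps power2_eq_square power3_eq_cube)
qed

lemma cubic_roots_around:
  fixes p :: "real \<Rightarrow> real"
  assumes p: "\<And>x. p x = A*x^3 + B*x^2 + C*x + D"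
    and "A > 0" "w > 0" "p 0 > 0" "p w < 0"
  obtains r1 r2 r3 where "r1 < 0" "0 < r2" "r2 < w" "w < r3"
    "\<And>x. p x = A*(x-r1)*(x-r2)*(x-r3)"
proof -
  have cont: "continuous_on S p" for S unfolding p by (intro continuous_intros)
  have "eventually (\<lambda>x. p x > 0) at_top" "eventually (\<lambda>x. p x < 0) at_bot"
    unfolding p using \<open>A > 0\<close> by real_asymp+
  then obtain M0 N0 where "\<And>x. x \<ge> M0 \<Longrightarrow> p x > 0" "\<And>x. x \<le> N0 \<Longrightarrow> p x < 0"
    unfolding eventually_at_top_linorder eventually_at_bot_linorder by blast
  then obtain M N where M: "p M > 0" "M \<ge> w" and N: "p N < 0" "N \<le> 0"
    by (meson max.cobounded1 max.cobounded2 min.cobounded1 min.cobounded2)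
  obtain r1 where r1: "N \<le> r1" "r1 \<le> 0" "p r1 = 0"
    using IVT'[of p N 0 0] N \<open>p 0 > 0\<close> cont by force
  obtain r2 where r2: "0 \<le> r2" "r2 \<le> w" "p r2 = 0"
    using IVT2'[of p w 0 0] \<open>p w < 0\<close> \<open>p 0 > 0\<close> \<open>w > 0\<close> cont by force
  obtain r3 where r3: "w \<le> r3" "r3 \<le> M" "p r3 = 0"
    using IVT'[of p w 0 M] \<open>p w < 0\<close> M cont by force
  have "r1 \<noteq> 0" "r2 \<noteq> 0" "r2 \<noteq> w" "r3 \<noteq> w"
    using r1(3) r2(3) r3(3) \<open>p 0 > 0\<close> \<open>p w < 0\<close> by auto
  then have "r1 < 0" "0 < r2" "r2 < w" "w < r3" using r1 r2 r3 by auto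
  moreover have "p x = A*(x-r1)*(x-r2)*(x-r3)" for x
    using cubic_eq_factor_by_roots[of r1 r2 r3 A B C D x] calculation r1(3) r2(3) r3(3)
    unfolding p by auto
  ultimately show ?thesis using that by blast
qed

definition quadratic_root_lo :: "real \<Rightarrow> real \<Rightarrow> real \<Rightarrow> real" where
  "quadratic_root_lo A B C = (-B - sqrt (discrim A B C)) / (2*A)"

definition quadratic_root_hi :: "real \<Rightarrow> real \<Rightarrow> real \<Rightarrow> real" where
  "quadratic_root_hi A B C = (-B + sqrt (discrim A B C)) / (2*A)"

lemma quadratic_eq_factor:
  assumes "A \<noteq> 0" "discrim A B C \<ge> 0"
  shows "A*x^2 + B*x + C = A*(x - quadratic_root_lo A B C)*(x - quadratic_root_hi A B C)"
proof -
  define s where "s = sqrt (discrim A B C)"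
  have "s^2 = B^2 - 4*A*C" unfolding s_def using assms(2) by (simp add: discrim_def)
  then show ?thesis
    unfolding quadratic_root_lo_def quadratic_root_hi_def s_def[symmetric] using assms(1)
    by (simp add: field_simps power2_eq_square) (metis distrib_left)
qed

lemma quadratic_root_lo_le_hi:
  assumes "A > 0" "discrim A B C \<ge> 0"
  shows "quadratic_root_lo A B C \<le> quadratic_root_hi A B C"
  unfolding quadratic_root_lo_def quadratic_root_hi_def using assms
  by (intro divide_right_mono) auto

lemma quadratic_root_lo_rationalized:
  assumes "A \<noteq> 0" "discrim A B C \<ge> 0" "-B + sqrt (discrim A B C) \<noteq> 0"
  shows "quadratic_root_lo A B C = 2*C / (-B + sqrt (discrim A B C))"
proof -
  define s where "s = sqrt (discrim A B C)"
  have "s^2 = B^2 - 4*A*C" unfolding s_def using assms(2) by (simp add: discrim_def)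
  then have "(-B - s) * (-B + s) = 4*A*C" by (simp add: algebra_simps power2_eq_square)
  then show ?thesis
    unfolding quadratic_root_lo_def s_def[symmetric] using assms(1,3)
    by (simp add: s_def field_simps)
qed

lemma quadratic_root_lo_pos:
  assumes "A > 0" "B < 0" "C > 0" "discrim A B C \<ge> 0"
  shows "quadratic_root_lo A B C > 0"
proof -
  have "-B + sqrt (discrim A B C) > 0"
    using \<open>B < 0\<close> real_sqrt_ge_zero[OF \<open>discrim A B C \<ge> 0\<close>] by linarith
  then show ?thesis
    using quadratic_root_lo_rationalized[of A B C] assms by simp
qed

lemma quadratic_root_lo_nonpos_hi_nonneg:
  assumes "A > 0" "C \<le> 0"
  shows "quadratic_root_lo A B C \<le> 0" "quadratic_root_hi A B C \<ge> 0"
proof -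
  have "B^2 \<le> discrim A B C" using assms mult_nonneg_nonpos[of A C] by (simp add: discrim_def)
  then have "\<bar>B\<bar> \<le> sqrt (discrim A B C)" using real_sqrt_le_mono by fastforce
  then show "quadratic_root_lo A B C \<le> 0" "quadratic_root_hi A B C \<ge> 0"
    unfolding quadratic_root_lo_def quadratic_root_hi_def using assms(1)
    by (simp_all add: divide_nonpos_pos)
qed

lemma S_cubic_is_cubic: "\<exists>B C D. \<forall>x. S_cubic x r t a = 4*a*x^3 + B*x^2 + C*x + D"
  unfolding S_cubic_def diff_conv_add_uminus mult_minus_left[symmetric] by blast

lemma S_cubic_0_pos:
  assumes "a > 0" "t > 0" "r < 1"
  shows "S_cubic 0 r t a > 0"
proof -
  have "a^2 - a*(4*r-2)*t + t^2 = (a-t)^2 + 4*(1-r)*(a*t)"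
    by (simp add: algebra_simps power2_eq_square)
  also have "\<dots> > 0" using assms by (simp add: add_nonneg_pos)
  finally show ?thesis using assms by (simp add: S_cubic_def)
qed

lemma S_cubic_a_plus_t_neg:
  assumes "a > 0" "t > 0" "0 < r" "r \<le> 1"
  shows "S_cubic (a+t) r t a < 0"
proof -
  have S: "S_cubic (a+t) r t a =
      r*t*((r-4)*t^3 + (22*r-4*r^2-24)*a*t^2 + (13*r-48)*a^2*t - 32*a^3)"
    unfolding S_cubic_def by algebra
  have "(r-4)*t^3 < 0" using assms by (simp add: mult_neg_pos)
  moreover have "22*r-4*r^2-24 < 0" using assms zero_le_power2[of r] by linarith
  then have "(22*r-4*r^2-24)*a*t^2 < 0" using assms by (simp add: mult_neg_pos)
  moreover have "(13*r-48)*a^2*t < 0" using assms by (simp add: mult_neg_pos)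
  moreover have "32*a^3 > 0" using assms by simp
  ultimately have "(r-4)*t^3 + (22*r-4*r^2-24)*a*t^2 + (13*r-48)*a^2*t - 32*a^3 < 0" by linarith
  then show ?thesis unfolding S using assms by (simp add: mult_pos_neg)
qed

lemma xL_pos_of_r_lt_1:
  assumes "a > 0" "0 < r" "r < 1" "t > 0"
  shows "xL r t a > 0"
proof -
  obtain B C D where S: "\<And>x. S_cubic x r t a = 4*a*x^3 + B*x^2 + C*x + D"
    using S_cubic_is_cubic by blast
  show ?thesis
  proof (rule cubic_roots_around[where p = "\<lambda>x. S_cubic x r t a", OF S])
    show "4*a > 0" "a+t > 0" using assms by auto
    show "S_cubic 0 r t a > 0" using S_cubic_0_pos assms by simp
    show "S_cubic (a+t) r t a < 0" using S_cubic_a_plus_t_neg assms by simp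
    fix y1 y2 y3
    assume "y1 < 0" "0 < y2" "y2 < a+t" "a+t < y3"
      and "\<And>x. S_cubic x r t a = 4*a*(x-y1)*(x-y2)*(x-y3)"
    then show ?thesis using xL_eqI[of a y1 y2 y3] assms by simp
  qed
qed

lemma S_cubic_r_1: "S_cubic x 1 t a = x * (4*a*x^2 + (t^2 - 20*a*t - 8*a^2)*x + 4*(a-t)^3)"
  unfolding S_cubic_def by (simp add: algebra_simps power2_eq_square power3_eq_cube)

lemma discrim_r_1: "discrim (4*a) (t^2 - 20*a*t - 8*a^2) (4*(a-t)^3) = t*(t+8*a)^3"
  unfolding discrim_def by algebra

definition root_r_1 :: "real \<Rightarrow> real \<Rightarrow> real" where
  "root_r_1 a t = quadratic_root_lo (4*a) (t^2 - 20*a*t - 8*a^2) (4*(a-t)^3)"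

lemma linear_coeff_r_1_neg:
  fixes a t :: real
  assumes "0 \<le> t" "t < a"
  shows "t^2 - 20*a*t - 8*a^2 < 0"
proof -
  have "t*t \<le> a*t" using assms by (intro mult_right_mono) auto
  moreover have "0 \<le> a*t" "0 < a*a" using assms by auto
  ultimately show ?thesis by (simp add: power2_eq_square)
qed

lemma root_r_1_pos_iff:
  assumes "a > 0" "t \<ge> 0"
  shows "root_r_1 a t > 0 \<longleftrightarrow> t < a"
proof (cases "t < a")
  case True
  have "root_r_1 a t > 0"
    unfolding root_r_1_def
    by (rule quadratic_root_lo_pos) (use True assms linear_coeff_r_1_neg discrim_r_1 in auto)
  then show ?thesis using True by simp
next
  case False
  have "root_r_1 a t \<le> 0"
    unfolding root_r_1_def
    by (rule quadratic_root_lo_nonpos_hi_nonneg(1)) (use False assms in auto)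
  then show ?thesis using False by simp
qed

lemma root_r_1_rationalized:
  assumes "0 \<le> t" "t < a"
  shows "root_r_1 a t = 8*(a-t)^3 / (8*a^2 + 20*a*t - t^2 + sqrt (t*(t+8*a)^3))"
proof -
  have "0 < -(t^2 - 20*a*t - 8*a^2) + sqrt (t*(t+8*a)^3)"
    using linear_coeff_r_1_neg[OF assms] assms by (simp add: add_pos_nonneg)
  then show ?thesis
    unfolding root_r_1_def
    using quadratic_root_lo_rationalized[of "4*a" "t^2 - 20*a*t - 8*a^2" "4*(a-t)^3"]
      discrim_r_1 assms by simp
qed

lemma xL_1_eq_max_root_r_1:
  assumes "a > 0" "t \<ge> 0"
  shows "xL 1 t a = max 0 (root_r_1 a t)"
proof -
  define B C where "B = t^2 - 20*a*t - 8*a^2" and "C = 4*(a-t)^3"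
  define hi where "hi = quadratic_root_hi (4*a) B C"
  have disc: "discrim (4*a) B C \<ge> 0" unfolding B_def C_def discrim_r_1 using assms by simp
  have S: "S_cubic x 1 t a = 4*a*(x - 0)*(x - root_r_1 a t)*(x - hi)" for x
  proof -
    have "S_cubic x 1 t a = x * (4*a*x^2 + B*x + C)" unfolding S_cubic_r_1 B_def C_def ..
    also have "\<dots> = x * (4*a*(x - root_r_1 a t)*(x - hi))"
      using quadratic_eq_factor[OF _ disc] assms unfolding root_r_1_def hi_def B_def C_def by simp
    finally show ?thesis by (simp add: ac_simps)
  qed
  have "root_r_1 a t \<le> hi"
    unfolding root_r_1_def hi_def B_def[symmetric] C_def[symmetric]
    using quadratic_root_lo_le_hi assms disc by simp
  moreover have "hi \<ge> 0" if "a \<le> t"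
    unfolding hi_def using quadratic_root_lo_nonpos_hi_nonneg(2) that assms by (simp add: C_def)
  ultimately have hi: "max 0 (root_r_1 a t) \<le> hi"
    using root_r_1_pos_iff[OF assms] by fastforce
  show ?thesis
  proof (cases "root_r_1 a t > 0")
    case True
    then show ?thesis using S xL_eqI[of a 0 "root_r_1 a t" hi] assms hi by simp
  next
    case False
    have "S_cubic x 1 t a = 4*a*(x - root_r_1 a t)*(x - 0)*(x - hi)" for x
      using S[of x] by (simp add: ac_simps)
    then show ?thesis using False xL_eqI[of a "root_r_1 a t" 0 hi] assms hi by simp
  qed
qed

lemma xL_1_eq_root_r_1:
  assumes "0 \<le> t" "t < a"
  shows "xL 1 t a = root_r_1 a t"
  using xL_1_eq_max_root_r_1[of a t] root_r_1_pos_iff[of a t] assms by simp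

lemma xL_1_pos:
  assumes "0 \<le> t" "t < a"
  shows "xL 1 t a > 0"
  using xL_1_eq_root_r_1 root_r_1_pos_iff assms by simp

lemma xL_1_eq_0:
  assumes "a > 0" "a \<le> t"
  shows "xL 1 t a = 0"
proof -
  have "t \<ge> 0" using assms by simp
  then show ?thesis using xL_1_eq_max_root_r_1[of a t] root_r_1_pos_iff[of a t] assms by simp
qed

lemma xL_1_asymp_equiv:
  assumes "a > 0"
  shows "(\<lambda>t. xL 1 t a) \<sim>[at_left a] (\<lambda>t. 4 / (27 * a^2) * (a - t)^3)"
proof -
  define den where "den t = 8*a^2 + 20*a*t - t^2 + sqrt (t*(t+8*a)^3)" for t
  have "eventually (\<lambda>t. t \<in> {0<..<a}) (at_left a)"
    using eventually_at_left_real assms by blast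
  then have "eventually (\<lambda>t. xL 1 t a = 8*(a-t)^3 / den t) (at_left a)"
    by eventually_elim (use assms xL_1_eq_root_r_1 root_r_1_rationalized in \<open>auto simp: den_def\<close>)
  then have "(\<lambda>t. xL 1 t a) \<sim>[at_left a] (\<lambda>t. 8*(a-t)^3 / den t)"
    by (rule asymp_equiv_refl_ev)
  also have "(\<lambda>t. 8*(a-t)^3 / den t) \<sim>[at_left a] (\<lambda>t. 8*(a-t)^3 / (54*a^2))"
  proof -
    have "a*(a+8*a)^3 = (27*a^2)^2" by algebra
    then have "sqrt (a*(a+8*a)^3) = 27*a^2" by (simp only: real_sqrt_abs) simp
    then have "den a = 54*a^2" unfolding den_def by (simp add: power2_eq_square)
    moreover have "(den \<longlongrightarrow> den a) (at_left a)"
      unfolding den_def by (intro tendsto_intros)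
    ultimately show ?thesis
      using assms by (intro asymp_equiv_intros tendsto_imp_asymp_equiv_const) auto
  qed
  also have "(\<lambda>t. 8*(a-t)^3 / (54*a^2)) = (\<lambda>t. 4 / (27 * a^2) * (a - t)^3)"
    by (simp add: field_simps)
  finally show ?thesis .
qed

theorem proposition1p2:
  fixes a :: real
  assumes "a > 0"
  shows "(\<forall>r. 0 < r \<and> r \<le> 1 \<longrightarrow> ((\<exists>t>0. xL r t a = 0) \<longleftrightarrow> r = 1)) \<and>
    (\<forall>r t. 0 < r \<and> r < 1 \<and> t > 0 \<longrightarrow> xL r t a > 0) \<and>
    (\<forall>t. 0 \<le> t \<and> t < tc a \<longrightarrow> xL 1 t a > 0) \<and>
    (\<forall>t. t \<ge> tc a \<longrightarrow> xL 1 t a = 0) \<and>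
    ((\<lambda>t. xL 1 t a) \<sim>[at_left (tc a)] (\<lambda>t. 4 / (27 * a^2) * (tc a - t)^3))"
proof (intro conjI allI impI)
  fix r :: real
  assume r: "0 < r \<and> r \<le> 1"
  show "(\<exists>t>0. xL r t a = 0) \<longleftrightarrow> r = 1"
  proof
    assume "\<exists>t>0. xL r t a = 0"
    then show "r = 1" using xL_pos_of_r_lt_1[OF assms] r by force
  next
    assume "r = 1"
    then show "\<exists>t>0. xL r t a = 0" using xL_1_eq_0[OF assms order_refl] assms by blast
  qed
qed (use assms xL_pos_of_r_lt_1 xL_1_pos xL_1_eq_0 xL_1_asymp_equiv in \<open>auto simp: tc_def\<close>)

end
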